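(* Assume $\sigma_1(x)=\tfrac12\sigma_1''(0)(x-a_1)(x-b_1)$ and $\sigma_2(x)=\tfrac12\sigma_2''(0)(x-a_2)(x-b_2)$ with $\sigma_1''(0)\ne0$, $\sigma_2''(0)\ne0$ and real zeros satisfying $a_2<0<a_1<b_2<b_1$, and assume $q^2\Lambda_q<0$, where $\Lambda_q=q^{-2}\Big[1+\frac{(1-q^{-1})\tau'(0)}{\frac12\sigma_1''(0)}\Big]$. Put $a=b_2$ and $b=q^{-1}b_1$, and suppose $q^{-N-1}a=b$ for some $N\in\mathbb{N}_0$. Let $$\rho(x)=|x|^{\iota}\frac{(qa/x,\,x/b;q)_\infty}{(a_1/x,\,x/a_2;q)_\infty},\qquad q^{\iota}=\frac{q^{-3}\sigma_2''(0)a_2}{\sigma_1''(0)b}.$$ Then there exist polynomials $P_0,\dots,P_N$, with $P_n$ of degree $n$ a solution of the q-EHT with $\lambda=\lambda_n$, and nonzero constants $d_n^2$, such that for $m,n\in\{0,\dots,N\}$ $$\int_a^{b}P_n(x)P_m(x)\rho(x)\,d_{q^{-1}}x=d_n^2\delta_{mn},$$ i.e. the $P_n$ are orthogonal with respect to $\rho$ supported on $\{q^{-k}a\}_{k=0}^N$.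
   Context: Throughout $0<q<1$. For a function $y$ and $\zeta\in\{q,q^{-1}\}$, $D_\zeta y(x)=\frac{y(x)-y(\zeta x)}{(1-\zeta)x}$ for $x\ne0$ and $D_\zeta y(0)=y'(0)$; $[n]_q=\frac{1-q^n}{1-q}$. Let $\sigma_1$ be a real polynomial of degree at most two, $\tau(x)=\tau'(0)x+\tau(0)$ a real polynomial with $\tau'(0)\ne0$, and $\sigma_2(x):=q[\sigma_1(x)+(1-q^{-1})x\tau(x)]$. The q-EHT with parameter $n$ is $\sigma_1(x)D_{q^{-1}}D_qy(x)+\tau(x)D_qy(x)+\lambda_ny(x)=0$, $\lambda_n=-[n]_q\big(\tau'(0)+\tfrac12[n-1]_{q^{-1}}\sigma_1''(0)\big)$. $(\alpha;q)_\infty=\prod_{k\ge0}(1-\alpha q^k)$, $(\alpha_1,\dots,\alpha_r;q)_\infty=\prod_i(\alpha_i;q)_\infty$. For $q^{\iota}=c$ ($c\ne0$), $\iota$ is any complex number with $e^{\iota\ln q}=c$ and $|x|^{\iota}:=e^{\iota\ln|x|}$. For $a>0$ and $b=q^{-N-1}a$, $\int_a^{b}f(x)\,d_{q^{-1}}x=(q^{-1}-1)a\sum_{k=0}^{N}q^{-k}f(q^{-k}a)$. *)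

theory Defs
  imports "HOL-Analysis.Analysis" "HOL-Computational_Algebra.Polynomial"
begin

definition qD :: "real \<Rightarrow> (real \<Rightarrow> real) \<Rightarrow> real \<Rightarrow> real" where
  "qD \<zeta> y x = (if x = 0 then deriv y 0 else (y x - y (\<zeta> * x)) / ((1 - \<zeta>) * x))"

definition qnum :: "real \<Rightarrow> int \<Rightarrow> real" where
  "qnum q n = (1 - q powi n) / (1 - q)"

definition sigma2 :: "real \<Rightarrow> (real \<Rightarrow> real) \<Rightarrow> (real \<Rightarrow> real) \<Rightarrow> real \<Rightarrow> real" where
  "sigma2 q \<sigma>1 \<tau> x = q * (\<sigma>1 x + (1 - 1/q) * x * \<tau> x)"

definition lam :: "real \<Rightarrow> real \<Rightarrow> real \<Rightarrow> nat \<Rightarrow> real" where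
  "lam q dtau0 ddsig0 n = - qnum q (int n) * (dtau0 + 1/2 * qnum (1/q) (int n - 1) * ddsig0)"

definition qEHT :: "real \<Rightarrow> (real \<Rightarrow> real) \<Rightarrow> (real \<Rightarrow> real) \<Rightarrow> real \<Rightarrow> (real \<Rightarrow> real) \<Rightarrow> bool" where
  "qEHT q \<sigma>1 \<tau> lm y \<longleftrightarrow>
     (\<forall>x. \<sigma>1 x * qD (1/q) (qD q y) x + \<tau> x * qD q y x + lm * y x = 0)"

definition qpoch_inf :: "real \<Rightarrow> real \<Rightarrow> real" where
  "qpoch_inf \<alpha> q = (\<Prod>k. 1 - \<alpha> * q ^ k)"

definition rho :: "real \<Rightarrow> complex \<Rightarrow> real \<Rightarrow> real \<Rightarrow> real \<Rightarrow> real \<Rightarrow> real \<Rightarrow> complex" where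
  "rho q \<iota> a b a1 a2 x =
     exp (\<iota> * of_real (ln \<bar>x\<bar>)) *
     of_real (qpoch_inf (q * a / x) q * qpoch_inf (x / b) q /
              (qpoch_inf (a1 / x) q * qpoch_inf (x / a2) q))"

text \<open>Jackson integral from a to b = q^(-N-1) a:
  (q^-1 - 1) a sum_{k=0}^N q^-k f(q^-k a).\<close>
definition jackson_int :: "real \<Rightarrow> real \<Rightarrow> nat \<Rightarrow> (real \<Rightarrow> complex) \<Rightarrow> complex" where
  "jackson_int q a N f =
     of_real ((1/q - 1) * a) * (\<Sum>k\<le>N. of_real ((1/q) ^ k) * f ((1/q) ^ k * a))"

end

theory Submission
  imports Defs
begin

text \<open>
  The operator \<open>L y = \<sigma>\<^sub>1 D\<^sub>q\<^sub>\<inverse> D\<^sub>q y + \<tau> D\<^sub>q y\<close> maps polynomials of degree \<open>\<le> n\<close> into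
  themselves and is triangular on monomials with diagonal \<open>-\<lambda>\<^sub>n\<close>. The condition
  \<open>\<Lambda>\<^sub>q < 0\<close> forces \<open>\<tau>'(0) / \<sigma>\<^sub>1''(0) > 0\<close>, which makes \<open>\<lambda>\<^sub>n\<close> strictly monotone in \<open>n\<close>,
  so every \<open>\<lambda>\<^sub>n\<close> has a monic eigenpolynomial \<open>P\<^sub>n\<close> of degree \<open>n\<close>.

  At the lattice points \<open>x\<^sub>k = q\<^sup>-\<^sup>k a\<close> the q-EHT is a three-term recurrence. Since
  \<open>q\<^sup>\<iota> = c\<close> is real, \<open>\<rho>(x\<^sub>k) = a\<^sup>\<iota> c\<^sup>-\<^sup>k w(x\<^sub>k)\<close> with a real weight \<open>w\<close>, and the shift
  identity \<open>(\<alpha>;q)\<^sub>\<infinity> = (1 - \<alpha>) (\<alpha>q;q)\<^sub>\<infinity>\<close> turns \<open>w(x)/w(x/q)\<close> into a rational function; this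
  gives the discrete Pearson equation \<open>W\<^sub>k \<sigma>\<^sub>1(x\<^sub>k) = W\<^sub>k\<^sub>+\<^sub>1 \<sigma>\<^sub>2(x\<^sub>k\<^sub>+\<^sub>1)\<close> for
  \<open>W\<^sub>k = q\<^sup>-\<^sup>k c\<^sup>-\<^sup>k w(x\<^sub>k)\<close>. Together with \<open>\<sigma>\<^sub>2(a) = \<sigma>\<^sub>1(q\<^sup>-\<^sup>N a) = 0\<close>, which kills the
  boundary terms, summation by parts shows that the recurrence is symmetric with respect to
  \<open>W\<close>, so eigenfunctions with different eigenvalues are orthogonal. The weights are positive
  on the lattice, and \<open>P\<^sub>n\<close> with \<open>n \<le> N\<close> cannot vanish at all \<open>N + 1\<close> nodes, so the norms
  are positive. The Jackson integral is the \<open>W\<close>-weighted sum times \<open>(q\<^sup>-\<^sup>1 - 1) a a\<^sup>\<iota> \<noteq> 0\<close>.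
\<close>

subsection \<open>The q-Pochhammer symbol\<close>

lemma convergent_prod_qpoch:
  fixes q \<alpha> :: real
  assumes "\<bar>q\<bar> < 1"
  shows "convergent_prod (\<lambda>k. 1 - \<alpha> * q ^ k)"
proof -
  have "summable (\<lambda>k. norm ((1 - \<alpha> * q ^ k) - 1))"
    using assms by (simp add: abs_mult power_abs summable_geometric)
  then show ?thesis
    by (intro abs_convergent_prod_imp_convergent_prod summable_imp_abs_convergent_prod)
qed

lemma qpoch_inf_shift:
  fixes q \<alpha> :: real
  assumes "\<bar>q\<bar> < 1"
  shows "qpoch_inf \<alpha> q = (1 - \<alpha>) * qpoch_inf (\<alpha> * q) q"
proof -
  have tail: "(\<lambda>k. 1 - \<alpha> * q ^ Suc k) = (\<lambda>k. 1 - (\<alpha> * q) * q ^ k)"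
    by (simp add: algebra_simps)
  have "(\<lambda>k. 1 - (\<alpha> * q) * q ^ k) has_prod qpoch_inf (\<alpha> * q) q"
    unfolding qpoch_inf_def by (rule convergent_prod_has_prod[OF convergent_prod_qpoch[OF assms]])
  then have "(\<lambda>k. 1 - \<alpha> * q ^ k) has_prod (qpoch_inf (\<alpha> * q) q * (1 - \<alpha>))"
    using has_prod_Suc_imp[of "\<lambda>k. 1 - \<alpha> * q ^ k"] unfolding tail by simp
  then show ?thesis
    unfolding qpoch_inf_def by (metis has_prod_unique mult.commute)
qed

lemma qpoch_inf_pos:
  fixes q \<alpha> :: real
  assumes "0 \<le> q" "q < 1" "\<alpha> < 1"
  shows "qpoch_inf \<alpha> q > 0"
  unfolding qpoch_inf_def
proof (rule has_prod_pos[OF convergent_prod_has_prod[OF convergent_prod_qpoch]])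
  show "\<bar>q\<bar> < 1" using assms by simp
  fix k
  have "0 \<le> q ^ k" "q ^ k \<le> 1" using assms by (auto simp: power_le_one)
  then have "\<alpha> * q ^ k < 1"
    using assms(3) by (cases "\<alpha> \<le> 0") (auto intro: mult_nonpos_nonneg[THEN le_less_trans] mult_left_le[THEN le_less_trans])
  then show "0 < 1 - \<alpha> * q ^ k" by simp
qed

subsection \<open>The q-derivative of a polynomial\<close>

text \<open>\<open>[n]\<^sub>z\<close> as a sum, so that it is also meaningful at \<open>z = 1\<close>, unlike qnum.\<close>

definition qnat :: "real \<Rightarrow> nat \<Rightarrow> real" where
  "qnat z n = (\<Sum>i<n. z ^ i)"

lemma qnat_0 [simp]: "qnat z 0 = 0"
  and qnat_Suc: "qnat z (Suc n) = 1 + z * qnat z n"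
  unfolding qnat_def sum.lessThan_Suc_shift by (simp_all add: sum_distrib_left)

lemma qnat_eq: "z \<noteq> 1 \<Longrightarrow> qnat z n = (1 - z ^ n) / (1 - z)"
  by (simp add: qnat_def sum_gp_strict)

lemma qnat_mono: "0 \<le> z \<Longrightarrow> m \<le> n \<Longrightarrow> qnat z m \<le> qnat z n"
  unfolding qnat_def by (rule sum_mono2) auto

lift_definition pqderiv :: "real \<Rightarrow> real poly \<Rightarrow> real poly"
  is "\<lambda>z p j. qnat z (Suc j) * coeff p (Suc j)"
proof -
  fix z :: real and p :: "real poly"
  have "\<forall>\<^sub>\<infinity>j. coeff p (Suc j) = 0"
    using MOST_Suc_iff[of "\<lambda>n. coeff p n = 0"] MOST_coeff_eq_0[of p] by simp
  then show "\<forall>\<^sub>\<infinity>j. qnat z (Suc j) * coeff p (Suc j) = 0"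
    by (rule MOST_mono) simp
qed

lemma coeff_pqderiv: "coeff (pqderiv z p) j = qnat z (Suc j) * coeff p (Suc j)"
  by (simp add: pqderiv.rep_eq)

lemma pqderiv_0 [simp]: "pqderiv z 0 = 0"
  by (rule poly_eqI) (simp add: coeff_pqderiv)

lemma pqderiv_add: "pqderiv z (p + r) = pqderiv z p + pqderiv z r"
  by (rule poly_eqI) (simp add: coeff_pqderiv algebra_simps)

lemma pqderiv_smult: "pqderiv z (smult c p) = smult c (pqderiv z p)"
  by (rule poly_eqI) (simp add: coeff_pqderiv)

lemma pqderiv_pCons: "pqderiv z (pCons a p) = p + smult z (pCons 0 (pqderiv z p))"
  by (rule poly_eqI) (simp add: coeff_pqderiv coeff_pCons qnat_Suc algebra_simps split: nat.split)

lemma pqderiv_monom: "pqderiv z (monom c n) = monom (c * qnat z n) (n - 1)"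
  by (cases n) (auto intro!: poly_eqI simp: coeff_pqderiv coeff_monom)

lemma poly_pqderiv:
  "poly p x - poly p (z * x) = (1 - z) * x * poly (pqderiv z p) x"
proof (induction p)
  case (pCons a p)
  have "poly (pCons a p) x - poly (pCons a p) (z * x)
      = (1 - z) * x * poly p x + z * x * (poly p x - poly p (z * x))"
    by (simp add: algebra_simps)
  also have "\<dots> = (1 - z) * x * (poly p x + z * x * poly (pqderiv z p) x)"
    unfolding pCons.IH by (simp add: algebra_simps)
  finally show ?case
    by (simp add: pqderiv_pCons)
qed simp

lemma qD_poly: "z \<noteq> 1 \<Longrightarrow> qD z (poly p) = poly (pqderiv z p)"
proof
  fix x assume z: "z \<noteq> 1"
  show "qD z (poly p) x = poly (pqderiv z p) x"
  proof (cases "x = 0")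
    case True
    have "deriv (poly p) 0 = poly (pderiv p) 0"
      by (rule DERIV_imp_deriv) (rule poly_DERIV)
    then show ?thesis
      using True by (simp add: qD_def poly_0_coeff_0 coeff_pderiv coeff_pqderiv qnat_Suc)
  next
    case False
    then show ?thesis
      using z poly_pqderiv[of p x z] by (simp add: qD_def)
  qed
qed

subsection \<open>Polynomial solutions of the q-EHT\<close>

definition qEHT_op :: "real \<Rightarrow> real poly \<Rightarrow> real poly \<Rightarrow> real poly \<Rightarrow> real poly" where
  "qEHT_op q S T p = S * pqderiv (1/q) (pqderiv q p) + T * pqderiv q p"

lemma qEHT_op_add: "qEHT_op q S T (p + r) = qEHT_op q S T p + qEHT_op q S T r"
  by (simp add: qEHT_op_def pqderiv_add algebra_simps)

lemma qEHT_op_smult: "qEHT_op q S T (smult c p) = smult c (qEHT_op q S T p)"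
  by (simp add: qEHT_op_def pqderiv_smult smult_add_right)

lemma qEHT_poly_iff:
  assumes "q \<noteq> 1"
  shows "qEHT q (poly S) (poly T) c (poly p) \<longleftrightarrow> qEHT_op q S T p + smult c p = 0"
proof -
  have "1/q \<noteq> 1" using assms by simp
  then have "qEHT q (poly S) (poly T) c (poly p) \<longleftrightarrow> poly (qEHT_op q S T p + smult c p) = poly 0"
    using assms by (simp add: qEHT_def qEHT_op_def qD_poly fun_eq_iff)
  then show ?thesis
    by (simp only: poly_eq_poly_eq_iff)
qed

definition qEHT_eigen :: "real \<Rightarrow> real \<Rightarrow> real \<Rightarrow> nat \<Rightarrow> real" where
  "qEHT_eigen q s t n = qnat q n * (t + s * qnat (1/q) (n - 1))"

lemma lam_eq_qEHT_eigen:
  assumes "q \<noteq> 1"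
  shows "lam q t (2 * s) n = - qEHT_eigen q s t n"
proof (cases n)
  case (Suc m)
  have "1/q \<noteq> 1" using assms by simp
  moreover have "int n - 1 = int m" using Suc by simp
  ultimately have "qnum q (int n) = qnat q n" "qnum (1/q) (int n - 1) = qnat (1/q) m"
    using assms by (simp_all add: qnum_def qnat_eq power_int_of_nat)
  then show ?thesis
    using Suc by (simp add: lam_def qEHT_eigen_def)
qed (simp add: lam_def qEHT_eigen_def qnum_def)

lemma coeff_qEHT_op_monom:
  "coeff (qEHT_op q [:e0, e1, s:] [:t0, t:] (monom 1 n)) (n + k) =
     (if k = 0 then qEHT_eigen q s t n else 0)"
proof -
  have op: "qEHT_op q [:e0, e1, s:] [:t0, t:] (monom 1 n) =
      monom (qnat q n * qnat (1/q) (n - 1)) (n - 2) * [:e0, e1, s:] + monom (qnat q n) (n - 1) * [:t0, t:]"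
    by (simp add: qEHT_op_def pqderiv_monom mult.commute numeral_2_eq_2)
  consider "n = 0" | "n = 1" | m where "n = Suc (Suc m)"
    by (metis One_nat_def not0_implies_Suc)
  then show ?thesis
  proof cases
    case 1
    then show ?thesis using op by (simp add: qEHT_eigen_def)
  next
    case 2
    then show ?thesis unfolding op by (cases k) (simp_all add: qEHT_eigen_def coeff_monom_mult)
  next
    case 3
    then have "n + k - m = Suc (Suc k)" "n + k - Suc m = Suc k" by simp_all
    with 3 show ?thesis
      unfolding op by (cases k) (simp_all add: qEHT_eigen_def coeff_monom_mult algebra_simps)
  qed
qed

text \<open>Solve \<open>(L - m) r = f\<close> coefficient by coefficient, from degree \<open>n - 1\<close> downwards.\<close>

lemma triangular_eigenpoly_aux:
  fixes L :: "'a::field poly \<Rightarrow> 'a poly"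
  assumes add: "\<And>p r. L (p + r) = L p + L r"
    and smult: "\<And>c p. L (smult c p) = smult c (L p)"
    and diag: "\<And>j. coeff (L (monom 1 j)) j = \<mu> j"
    and upper: "\<And>j i. j < i \<Longrightarrow> coeff (L (monom 1 j)) i = 0"
    and f: "\<forall>i\<ge>n. coeff f i = 0" and m: "\<forall>j<n. \<mu> j \<noteq> m"
  shows "\<exists>r. (\<forall>i\<ge>n. coeff r i = 0) \<and> L r - smult m r = f"
  using f m
proof (induction n arbitrary: f)
  case 0
  then have "f = 0" by (intro poly_eqI) auto
  moreover have "L 0 = 0" using smult[of 0 0] by simp
  ultimately show ?case by (intro exI[of _ 0]) auto
next
  case (Suc n)
  define r0 where "r0 = smult (coeff f n / (\<mu> n - m)) (monom 1 n)"
  define f' where "f' = f - (L r0 - smult m r0)"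
  have "\<mu> n - m \<noteq> 0" using Suc.prems(2) by auto
  then have "coeff f' n = 0"
    by (simp add: f'_def r0_def smult diag field_simps)
  moreover have "coeff f' i = 0" if "n < i" for i
    using Suc.prems(1) that by (simp add: f'_def r0_def smult upper)
  ultimately have "\<forall>i\<ge>n. coeff f' i = 0"
    by (auto simp: le_less)
  then obtain r1 where r1: "\<forall>i\<ge>n. coeff r1 i = 0" "L r1 - smult m r1 = f'"
    using Suc.IH Suc.prems(2) by auto
  have "L (r0 + r1) - smult m (r0 + r1) = f"
    using r1(2) by (simp add: add f'_def algebra_simps smult_add_right)
  moreover have "\<forall>i\<ge>Suc n. coeff (r0 + r1) i = 0"
    using r1(1) by (simp add: r0_def coeff_monom)
  ultimately show ?case by blast
qed

lemma triangular_eigenpoly: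
  fixes L :: "'a::field poly \<Rightarrow> 'a poly"
  assumes add: "\<And>p r. L (p + r) = L p + L r"
    and smult: "\<And>c p. L (smult c p) = smult c (L p)"
    and diag: "\<And>j. coeff (L (monom 1 j)) j = \<mu> j"
    and upper: "\<And>j i. j < i \<Longrightarrow> coeff (L (monom 1 j)) i = 0"
    and distinct: "\<And>j. j < n \<Longrightarrow> \<mu> j \<noteq> \<mu> n"
  shows "\<exists>P. degree P = n \<and> coeff P n = 1 \<and> L P = smult (\<mu> n) P"
proof -
  define f where "f = smult (\<mu> n) (monom 1 n) - L (monom 1 n)"
  have "\<forall>i\<ge>n. coeff f i = 0"
    by (auto simp: f_def diag upper coeff_monom le_less)
  then obtain r where r: "\<forall>i\<ge>n. coeff r i = 0" "L r - smult (\<mu> n) r = f"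
    using triangular_eigenpoly_aux[OF add smult diag upper] distinct by blast
  define P where "P = monom 1 n + r"
  have "L P = smult (\<mu> n) P"
    using r(2) by (simp add: P_def add f_def algebra_simps smult_add_right)
  moreover have "degree P = n"
    using r(1) by (intro antisym degree_le le_degree) (auto simp: P_def coeff_monom)
  moreover have "coeff P n = 1"
    using r(1) by (simp add: P_def)
  ultimately show ?thesis by blast
qed

lemma qEHT_polynomial_solutions:
  assumes "q \<noteq> 1" and inj: "inj (lam q t (2 * s))"
  shows "\<exists>P. \<forall>n. degree (P n) = n \<and> coeff (P n) n = 1 \<and>
           qEHT q (poly [:e0, e1, s:]) (poly [:t0, t:]) (lam q t (2 * s) n) (poly (P n))"
proof -
  have "\<exists>P. degree P = n \<and> coeff P n = 1 \<and> qEHT_op q [:e0, e1, s:] [:t0, t:] P = smult (qEHT_eigen q s t n) P"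
    for n
  proof (rule triangular_eigenpoly[OF qEHT_op_add qEHT_op_smult])
    show "coeff (qEHT_op q [:e0, e1, s:] [:t0, t:] (monom 1 j)) j = qEHT_eigen q s t j" for j
      using coeff_qEHT_op_monom[of q e0 e1 s t0 t j 0] by simp
    show "coeff (qEHT_op q [:e0, e1, s:] [:t0, t:] (monom 1 j)) i = 0" if "j < i" for j i
      using coeff_qEHT_op_monom[of q e0 e1 s t0 t j "i - j"] that by simp
    show "qEHT_eigen q s t j \<noteq> qEHT_eigen q s t n" if "j < n" for j
    proof -
      have "lam q t (2 * s) j \<noteq> lam q t (2 * s) n"
        using inj that by (auto dest: injD)
      then show ?thesis by (simp add: lam_eq_qEHT_eigen[OF assms(1)])
    qed
  qed
  then obtain P where "\<And>n. degree (P n) = n \<and> coeff (P n) n = 1 \<and>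
      qEHT_op q [:e0, e1, s:] [:t0, t:] (P n) = smult (qEHT_eigen q s t n) (P n)"
    by metis
  then show ?thesis
    using assms(1) by (intro exI[of _ P]) (simp add: qEHT_poly_iff lam_eq_qEHT_eigen)
qed

lemma strict_mono_qEHT_eigen:
  assumes "0 < q" "0 < s" "0 < t"
  shows "strict_mono (qEHT_eigen q s t)"
  unfolding strict_mono_Suc_iff
proof
  fix n
  have "qnat q n < qnat q (Suc n)"
    using assms(1) by (simp add: qnat_def)
  moreover have "t + s * qnat (1/q) (n - 1) \<le> t + s * qnat (1/q) (Suc n - 1)"
    using assms by (simp add: qnat_mono)
  moreover have "0 \<le> qnat q n" "0 < t + s * qnat (1/q) (n - 1)"
    using assms qnat_mono[of _ 0] by (auto intro: add_pos_nonneg)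
  ultimately show "qEHT_eigen q s t n < qEHT_eigen q s t (Suc n)"
    unfolding qEHT_eigen_def by (rule mult_less_le_imp_less)
qed

lemma inj_lam:
  assumes "0 < q" "q \<noteq> 1" "s \<noteq> 0" "0 < t / s"
  shows "inj (lam q t (2 * s))"
proof -
  have "lam q t (2 * s) = (\<lambda>n. - s * qEHT_eigen q 1 (t / s) n)"
    unfolding lam_eq_qEHT_eigen[OF assms(2)] using assms(3)
    by (simp add: fun_eq_iff qEHT_eigen_def field_simps)
  moreover have "inj (qEHT_eigen q 1 (t / s))"
    using strict_mono_qEHT_eigen[of q 1 "t / s"] assms by (simp add: strict_mono_imp_inj_on)
  ultimately show ?thesis
    using assms(3) by (simp add: inj_def)
qed

subsection \<open>Orthogonality on the q-lattice\<close>

lemma qEHT_lattice_equation: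
  assumes "qEHT q \<sigma>1 \<tau> c y" "q \<noteq> 0" "q \<noteq> 1" "x \<noteq> 0"
  shows "q\<^sup>2 * \<sigma>1 x * (y (1/q * x) - y x) + sigma2 q \<sigma>1 \<tau> x * (y (q * x) - y x)
           + c * (1 - q)\<^sup>2 * x\<^sup>2 * y x = 0"
proof -
  define d where "d = (1 - q) * x"
  have "d \<noteq> 0" using assms(3,4) by (simp add: d_def)
  have Dx: "d * qD q y x = y x - y (q * x)"
    using \<open>d \<noteq> 0\<close> assms(4) by (simp add: qD_def d_def)
  have Dxq: "d * qD q y (1/q * x) = q * (y (1/q * x) - y x)"
    using assms(2-4) by (simp add: qD_def d_def field_simps)
  have "d / ((1 - 1/q) * x) = - q"
    using assms(2-4) by (simp add: d_def field_simps)
  then have DDx: "d * qD (1/q) (qD q y) x = - q * (qD q y x - qD q y (1/q * x))"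
    using assms(4) by (simp add: qD_def times_divide_eq_left[symmetric] mult.commute)
  have "0 = d\<^sup>2 * (\<sigma>1 x * qD (1/q) (qD q y) x + \<tau> x * qD q y x + c * y x)"
    using assms(1) by (simp add: qEHT_def)
  also have "\<dots> = \<sigma>1 x * d * (d * qD (1/q) (qD q y) x) + \<tau> x * d * (d * qD q y x) + c * d\<^sup>2 * y x"
    by (simp add: algebra_simps power2_eq_square)
  also have "\<dots> = - q * \<sigma>1 x * (d * qD q y x - d * qD q y (1/q * x))
      + \<tau> x * d * (d * qD q y x) + c * d\<^sup>2 * y x"
    unfolding DDx by (simp add: algebra_simps)
  also have "\<dots> = q\<^sup>2 * \<sigma>1 x * (y (1/q * x) - y x) + (q * \<sigma>1 x + (q - 1) * x * \<tau> x) * (y (q * x) - y x)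
      + c * (1 - q)\<^sup>2 * x\<^sup>2 * y x"
    unfolding Dx Dxq by (simp add: d_def algebra_simps power2_eq_square)
  also have "q * \<sigma>1 x + (q - 1) * x * \<tau> x = sigma2 q \<sigma>1 \<tau> x"
    using assms(2) by (simp add: sigma2_def algebra_simps)
  finally show ?thesis by simp
qed

lemma summation_by_parts_balanced:
  fixes \<Omega> A B u v :: "nat \<Rightarrow> 'a::comm_ring"
  assumes "B 0 = 0" and "\<And>k. k < N \<Longrightarrow> \<Omega> k * A k = \<Omega> (Suc k) * B (Suc k)"
  shows "(\<Sum>k\<le>N. \<Omega> k * (A k * (u (Suc k) - u k) + B k * (u (k - 1) - u k)) * v k) =
     \<Omega> N * A N * (u (Suc N) - u N) * v N
     - (\<Sum>k<N. \<Omega> k * A k * (u (Suc k) - u k) * (v (Suc k) - v k))"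
  using assms(2)
proof (induction N)
  case 0
  then show ?case by (simp add: assms(1) mult.assoc)
next
  case (Suc N)
  define T where "T = (\<Sum>k<N. \<Omega> k * A k * (u (Suc k) - u k) * (v (Suc k) - v k))"
  have IH: "(\<Sum>k\<le>N. \<Omega> k * (A k * (u (Suc k) - u k) + B k * (u (k - 1) - u k)) * v k) =
      \<Omega> N * A N * (u (Suc N) - u N) * v N - T"
    using Suc by (simp add: T_def)
  have balance: "\<Omega> (Suc N) * B (Suc N) = \<Omega> N * A N"
    using Suc.prems by simp
  have "(\<Sum>k\<le>Suc N. \<Omega> k * (A k * (u (Suc k) - u k) + B k * (u (k - 1) - u k)) * v k)
      = \<Omega> N * A N * (u (Suc N) - u N) * v N - T
        + \<Omega> (Suc N) * A (Suc N) * (u (Suc (Suc N)) - u (Suc N)) * v (Suc N)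
        + (\<Omega> (Suc N) * B (Suc N)) * (u N - u (Suc N)) * v (Suc N)"
    unfolding sum.atMost_Suc IH by (simp add: algebra_simps)
  also have "\<dots> = \<Omega> (Suc N) * A (Suc N) * (u (Suc (Suc N)) - u (Suc N)) * v (Suc N)
      - (\<Sum>k<Suc N. \<Omega> k * A k * (u (Suc k) - u k) * (v (Suc k) - v k))"
    unfolding balance by (simp add: T_def algebra_simps)
  finally show ?case .
qed

text \<open>By the balance condition and \<open>A N = 0\<close>, summation by parts turns
  \<open>\<Sum>\<^sub>k \<Omega>\<^sub>k (A\<^sub>k \<Delta>u\<^sub>k + B\<^sub>k \<nabla>u\<^sub>k) v\<^sub>k\<close> into an expression symmetric in \<open>u\<close> and \<open>v\<close>.\<close>

lemma lattice_eigenvectors_orthogonal: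
  fixes \<Omega> A B R u v :: "nat \<Rightarrow> 'a::idom"
  assumes B0: "B 0 = 0" and AN: "A N = 0"
    and balance: "\<And>k. k < N \<Longrightarrow> \<Omega> k * A k = \<Omega> (Suc k) * B (Suc k)"
    and u: "\<And>k. k \<le> N \<Longrightarrow> A k * (u (Suc k) - u k) + B k * (u (k - 1) - u k) + \<alpha> * R k * u k = 0"
    and v: "\<And>k. k \<le> N \<Longrightarrow> A k * (v (Suc k) - v k) + B k * (v (k - 1) - v k) + \<beta> * R k * v k = 0"
    and "\<alpha> \<noteq> \<beta>"
  shows "(\<Sum>k\<le>N. \<Omega> k * R k * u k * v k) = 0"
proof -
  have eq_u: "A k * (u (Suc k) - u k) + B k * (u (k - 1) - u k) = - (\<alpha> * R k * u k)"
    and eq_v: "A k * (v (Suc k) - v k) + B k * (v (k - 1) - v k) = - (\<beta> * R k * v k)"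
    if "k \<in> {..N}" for k
    using u[of k] v[of k] that by (simp_all add: eq_neg_iff_add_eq_0)
  define D where "D = (\<Sum>k<N. \<Omega> k * A k * (u (Suc k) - u k) * (v (Suc k) - v k))"
  have "\<alpha> * (\<Sum>k\<le>N. \<Omega> k * R k * u k * v k) = - (\<Sum>k\<le>N. \<Omega> k * - (\<alpha> * R k * u k) * v k)"
    by (simp add: sum_distrib_left sum_negf algebra_simps)
  also have "\<dots> = - (\<Sum>k\<le>N. \<Omega> k * (A k * (u (Suc k) - u k) + B k * (u (k - 1) - u k)) * v k)"
    by (rule arg_cong[of _ _ uminus], rule sum.cong) (simp_all only: eq_u)
  also have "\<dots> = D"
    using summation_by_parts_balanced[of B N \<Omega> A u v, OF B0 balance] AN by (simp add: D_def)
  also have "\<dots> = - (\<Sum>k\<le>N. \<Omega> k * (A k * (v (Suc k) - v k) + B k * (v (k - 1) - v k)) * u k)"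
    using summation_by_parts_balanced[of B N \<Omega> A v u, OF B0 balance] AN
    by (simp add: D_def algebra_simps)
  also have "\<dots> = - (\<Sum>k\<le>N. \<Omega> k * - (\<beta> * R k * v k) * u k)"
    by (rule arg_cong[of _ _ uminus], rule sum.cong) (simp_all only: eq_v)
  also have "\<dots> = \<beta> * (\<Sum>k\<le>N. \<Omega> k * R k * u k * v k)"
    by (simp add: sum_distrib_left sum_negf algebra_simps)
  finally show ?thesis
    using \<open>\<alpha> \<noteq> \<beta>\<close> by simp
qed

lemma qEHT_orthogonal_on_lattice:
  fixes W :: "nat \<Rightarrow> real"
  assumes u: "qEHT q \<sigma>1 \<tau> \<alpha> u" and v: "qEHT q \<sigma>1 \<tau> \<beta> v" and "\<alpha> \<noteq> \<beta>"
    and q: "0 < q" "q < 1" and "a \<noteq> 0"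
    and left: "sigma2 q \<sigma>1 \<tau> a = 0" and right: "\<sigma>1 ((1/q) ^ N * a) = 0"
    and pearson: "\<And>k. k < N \<Longrightarrow>
       W k * \<sigma>1 ((1/q) ^ k * a) = W (Suc k) * sigma2 q \<sigma>1 \<tau> ((1/q) ^ Suc k * a)"
  shows "(\<Sum>k\<le>N. W k * u ((1/q) ^ k * a) * v ((1/q) ^ k * a)) = 0"
proof -
  define x where "x k = (1/q) ^ k * a" for k
  have x0: "x k \<noteq> 0" for k using q \<open>a \<noteq> 0\<close> by (simp add: x_def)
  have xSuc: "x (Suc k) = 1/q * x k" for k by (simp add: x_def)
  have xpred: "q * x k = x (k - 1)" if "k > 0" for k
    using that q by (cases k) (simp_all add: xSuc)
  define A where "A k = q\<^sup>2 * \<sigma>1 (x k)" for k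
  define B where "B k = sigma2 q \<sigma>1 \<tau> (x k)" for k
  define R where "R k = (1 - q)\<^sup>2 * (x k)\<^sup>2" for k
  have B0: "B 0 = 0" using left by (simp add: B_def x_def)
  have "R k \<noteq> 0" for k using q x0 by (simp add: R_def)
  have node: "A k * (y (x (Suc k)) - y (x k)) + B k * (y (x (k - 1)) - y (x k)) + c * R k * y (x k) = 0"
    if "qEHT q \<sigma>1 \<tau> c y" for c y k
  proof -
    have "B k * (y (x (k - 1)) - y (x k)) = B k * (y (q * x k) - y (x k))"
      using B0 xpred by (cases "k = 0") simp_all
    then show ?thesis
      using qEHT_lattice_equation[OF that _ _ x0, of k] q
      by (simp only:) (simp add: A_def B_def R_def xSuc mult.assoc)
  qed
  \<comment> \<open>with \<open>\<Omega> = W / R\<close> the Pearson equation for \<open>W\<close> is the balance condition\<close>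
  have "(\<Sum>k\<le>N. W k / R k * R k * u (x k) * v (x k)) = 0"
  proof (rule lattice_eigenvectors_orthogonal[OF B0 _ _ node[OF u] node[OF v] \<open>\<alpha> \<noteq> \<beta>\<close>])
    show "A N = 0" using right by (simp add: A_def x_def)
    show "W k / R k * A k = W (Suc k) / R (Suc k) * B (Suc k)" if "k < N" for k
    proof -
      have "R (Suc k) = R k / q\<^sup>2"
        using q by (simp add: R_def xSuc power_mult_distrib power_divide)
      have "W k / R k * A k = q\<^sup>2 / R k * (W k * \<sigma>1 (x k))"
        by (simp add: A_def)
      also have "\<dots> = q\<^sup>2 / R k * (W (Suc k) * B (Suc k))"
        using pearson[OF that] by (simp add: x_def B_def)
      also have "\<dots> = W (Suc k) / R (Suc k) * B (Suc k)"
        using \<open>R (Suc k) = R k / q\<^sup>2\<close> by simp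
      finally show ?thesis .
    qed
  qed
  then show ?thesis
    using \<open>\<And>k. R k \<noteq> 0\<close> by (simp add: x_def)
qed

lemma sum_weighted_poly_square_pos:
  fixes p :: "real poly" and x W :: "nat \<Rightarrow> real"
  assumes "p \<noteq> 0" "degree p \<le> N" "inj_on x {..N}" "\<And>k. k \<le> N \<Longrightarrow> 0 < W k"
  shows "0 < (\<Sum>k\<le>N. W k * poly p (x k) * poly p (x k))"
proof -
  obtain k where k: "k \<le> N" "poly p (x k) \<noteq> 0"
  proof (rule ccontr)
    assume "\<not> thesis"
    then have "\<And>y. y \<in> x ` {..N} \<Longrightarrow> poly p y = poly 0 y"
      using that by auto
    moreover have "card (x ` {..N}) = Suc N"
      using card_image[OF assms(3)] by simp
    ultimately have "p = 0"
      using assms(2) by (intro poly_eqI_degree[of "x ` {..N}"]) auto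
    with assms(1) show False ..
  qed
  show ?thesis
  proof (rule sum_pos2[of "{..N}" k])
    show "0 < W k * poly p (x k) * poly p (x k)"
      using k assms(4)[of k] by (auto simp: mult.assoc zero_less_mult_iff linorder_neq_iff)
    show "0 \<le> W i * poly p (x i) * poly p (x i)" if "i \<in> {..N}" for i
      using assms(4)[of i] that by (simp add: mult.assoc)
  qed (use k in auto)
qed

lemma qEHT_lattice_gram:
  fixes P :: "nat \<Rightarrow> real poly" and W :: "nat \<Rightarrow> real"
  assumes q: "0 < q" "q < 1" and "a \<noteq> 0"
    and P: "\<And>n. degree (P n) = n" "\<And>n. P n \<noteq> 0" "\<And>n. qEHT q \<sigma>1 \<tau> (l n) (poly (P n))"
    and "inj l"
    and boundary: "sigma2 q \<sigma>1 \<tau> a = 0" "\<sigma>1 ((1/q) ^ N * a) = 0"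
    and pearson: "\<And>k. k < N \<Longrightarrow>
       W k * \<sigma>1 ((1/q) ^ k * a) = W (Suc k) * sigma2 q \<sigma>1 \<tau> ((1/q) ^ Suc k * a)"
    and W: "\<And>k. k \<le> N \<Longrightarrow> 0 < W k"
  defines "G \<equiv> \<lambda>n m. \<Sum>k\<le>N. W k * poly (P n) ((1/q) ^ k * a) * poly (P m) ((1/q) ^ k * a)"
  shows "\<And>n m. n \<noteq> m \<Longrightarrow> G n m = 0" and "\<And>n. n \<le> N \<Longrightarrow> 0 < G n n"
proof -
  fix n m :: nat
  assume "n \<noteq> m"
  then show "G n m = 0"
    unfolding G_def using \<open>inj l\<close>
    by (intro qEHT_orthogonal_on_lattice[OF P(3) P(3) _ q \<open>a \<noteq> 0\<close> boundary pearson])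
       (auto dest: injD)
next
  fix n :: nat
  assume "n \<le> N"
  have "inj_on (\<lambda>k. (1/q) ^ k * a) {..N}"
    using q \<open>a \<noteq> 0\<close> by (auto intro!: inj_onI)
  with \<open>n \<le> N\<close> show "0 < G n n"
    unfolding G_def using P(1,2) W by (intro sum_weighted_poly_square_pos) auto
qed

subsection \<open>The weight\<close>

definition qweight :: "real \<Rightarrow> real \<Rightarrow> real \<Rightarrow> real \<Rightarrow> real \<Rightarrow> real \<Rightarrow> real" where
  "qweight q a b a1 a2 x =
     qpoch_inf (q * a / x) q * qpoch_inf (x / b) q / (qpoch_inf (a1 / x) q * qpoch_inf (x / a2) q)"

lemma rho_eq_qweight:
  "rho q \<iota> a b a1 a2 x = exp (\<iota> * of_real (ln \<bar>x\<bar>)) * of_real (qweight q a b a1 a2 x)"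
  by (simp add: rho_def qweight_def)

lemma qweight_pos:
  assumes "0 < q" "q < 1" "0 < x" "q * a < x" "x < b" "a1 < x" "a2 < 0"
  shows "qweight q a b a1 a2 x > 0"
proof -
  have "q * a / x < 1" "x / b < 1" "a1 / x < 1" "x / a2 < 1"
    using assms by (simp_all add: divide_less_eq divide_neg_pos)
  then show ?thesis
    unfolding qweight_def using assms(1,2)
    by (intro divide_pos_pos mult_pos_pos qpoch_inf_pos) simp_all
qed

text \<open>The factor \<open>s\<^sub>2 a\<^sub>2 / (q\<^sup>2 s\<^sub>1 b\<^sub>1)\<close> is \<open>q\<^sup>\<iota>\<close>.\<close>

lemma qweight_pearson:
  assumes q: "0 < q" "q < 1" and x: "0 < x" "a1 < x" and "a2 < 0" "b1 \<noteq> 0" "s1 \<noteq> 0"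
  shows "s2 * a2 / (q\<^sup>2 * s1 * b1) * qweight q b2 (b1/q) a1 a2 x * (s1 * (x - a1) * (x - b1))
       = 1/q * qweight q b2 (b1/q) a1 a2 (1/q * x) * (s2 * (1/q * x - a2) * (1/q * x - b2))"
proof -
  have shift: "qpoch_inf \<alpha> q = (1 - \<alpha>) * qpoch_inf (\<alpha> * q) q" for \<alpha>
    using q by (intro qpoch_inf_shift) simp
  define Q1 Q2 Q3 Q4 where "Q1 = qpoch_inf (q * q * b2 / x) q" and "Q2 = qpoch_inf (q * x / b1) q"
    and "Q3 = qpoch_inf (q * a1 / x) q" and "Q4 = qpoch_inf (x / a2) q"
  have "q * a1 < x"
  proof (cases "a1 \<le> 0")
    case True
    then show ?thesis using q x by (smt (verit) mult_nonneg_nonpos)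
  next
    case False
    then show ?thesis using q x by (smt (verit) mult_less_cancel_right1)
  qed
  then have "q * a1 / x < 1" "x / a2 < 1"
    using x \<open>a2 < 0\<close> by (auto simp: divide_less_eq divide_neg_pos)
  then have "Q3 \<noteq> 0" "Q4 \<noteq> 0"
    using q by (simp_all add: Q3_def Q4_def qpoch_inf_pos[THEN less_imp_neq, symmetric])
  have "qpoch_inf (q * b2 / x) q = (1 - q * b2 / x) * Q1"
    "qpoch_inf (q * b2 / (1/q * x)) q = Q1"
    "qpoch_inf (x / (b1/q)) q = Q2"
    "qpoch_inf (1/q * x / (b1/q)) q = (1 - x / b1) * Q2"
    "qpoch_inf (a1 / x) q = (1 - a1 / x) * Q3"
    "qpoch_inf (a1 / (1/q * x)) q = Q3"
    "qpoch_inf (1/q * x / a2) q = (1 - x / (q * a2)) * Q4"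
    using shift[of "q * b2 / x"] shift[of "x / b1"] shift[of "a1 / x"] shift[of "x / (q * a2)"] q
    by (simp_all add: Q1_def Q2_def Q3_def Q4_def mult.commute mult.left_commute)
  then have w: "qweight q b2 (b1/q) a1 a2 x = (1 - q * b2 / x) * Q1 * Q2 / ((1 - a1 / x) * Q3 * Q4)"
    and wq: "qweight q b2 (b1/q) a1 a2 (1/q * x) = Q1 * ((1 - x / b1) * Q2) / (Q3 * ((1 - x / (q * a2)) * Q4))"
    unfolding qweight_def by (simp_all add: Q4_def mult.assoc)
  have "q * a2 < 0"
    using q \<open>a2 < 0\<close> by (simp add: mult_pos_neg)
  then have "x - a1 \<noteq> 0" "q * a2 - x \<noteq> 0" "q \<noteq> 0" "a2 \<noteq> 0"
    using q x by auto
  then show ?thesis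
    unfolding w wq using x(1) \<open>b1 \<noteq> 0\<close> \<open>s1 \<noteq> 0\<close> \<open>Q3 \<noteq> 0\<close> \<open>Q4 \<noteq> 0\<close>
    by (simp add: field_simps power2_eq_square)
qed

lemma qweight_lattice:
  fixes q a1 a2 b1 b2 s1 s2 :: real
  assumes q: "0 < q" "q < 1" and zeros: "a2 < 0" "0 < a1" "a1 < b2" "b2 < b1"
    and N: "(1/q) ^ N * b2 = b1" and "s1 * s2 < 0"
    and c_def: "c = s2 * a2 / (q\<^sup>2 * s1 * b1)"
    and W_def: "\<And>k. W k = (1/q) ^ k * qweight q b2 (b1/q) a1 a2 ((1/q) ^ k * b2) / c ^ k"
  shows "0 < c"
    and "\<And>k. k \<le> N \<Longrightarrow> 0 < W k"
    and "\<And>k. W k * (s1 * ((1/q) ^ k * b2 - a1) * ((1/q) ^ k * b2 - b1))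
            = W (Suc k) * (s2 * ((1/q) ^ Suc k * b2 - a2) * ((1/q) ^ Suc k * b2 - b2))"
proof -
  have "s1 \<noteq> 0" using \<open>s1 * s2 < 0\<close> by auto
  have "c = (s1 * s2) * a2 / (q\<^sup>2 * s1\<^sup>2 * b1)"
    using \<open>s1 \<noteq> 0\<close> by (simp add: c_def power2_eq_square)
  also have "\<dots> > 0"
  proof (rule divide_pos_pos)
    show "0 < s1 * s2 * a2" using mult_neg_neg[OF \<open>s1 * s2 < 0\<close> zeros(1)] .
    show "0 < q\<^sup>2 * s1\<^sup>2 * b1" using \<open>s1 \<noteq> 0\<close> q zeros by simp
  qed
  finally show "0 < c" .
  fix k
  define x where "x = (1/q) ^ k * b2"
  have "1 \<le> (1/q) ^ k" using q by simp
  then have "b2 \<le> x" "0 < x" using zeros by (simp_all add: x_def)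
  then have "a1 < x" using zeros by simp
  have "b1 < b1 / q" using q zeros by (simp add: less_divide_eq)
  { assume "k \<le> N"
    then have "x \<le> b1" unfolding x_def N[symmetric] using q zeros by (simp add: power_increasing)
    have "q * b2 < b2" using q zeros by simp
    then have "q * b2 < x" using \<open>b2 \<le> x\<close> by linarith
    have "0 < qweight q b2 (b1/q) a1 a2 x"
      using \<open>q * b2 < x\<close> \<open>b2 \<le> x\<close> \<open>0 < x\<close> \<open>a1 < x\<close> \<open>x \<le> b1\<close> \<open>b1 < b1 / q\<close> q zeros
      by (intro qweight_pos) auto
    then show "0 < W k" using q \<open>0 < c\<close> by (simp add: W_def x_def)
  }
  have "(1/q) ^ Suc k * b2 = 1/q * x" by (simp add: x_def)
  have "W k * (s1 * (x - a1) * (x - b1))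
      = (1/q) ^ k / c ^ Suc k * (c * qweight q b2 (b1/q) a1 a2 x * (s1 * (x - a1) * (x - b1)))"
    using \<open>0 < c\<close> unfolding W_def x_def[symmetric] by simp
  also have "\<dots> = (1/q) ^ k / c ^ Suc k * (1/q * qweight q b2 (b1/q) a1 a2 (1/q * x) * (s2 * (1/q * x - a2) * (1/q * x - b2)))"
    using qweight_pearson[OF q \<open>0 < x\<close> \<open>a1 < x\<close> zeros(1) _ \<open>s1 \<noteq> 0\<close>, of b1 s2 b2] zeros
    unfolding c_def by simp
  also have "\<dots> = W (Suc k) * (s2 * (1/q * x - a2) * (1/q * x - b2))"
    unfolding W_def \<open>(1/q) ^ Suc k * b2 = 1/q * x\<close> by (simp add: mult_ac)
  finally show "W k * (s1 * ((1/q) ^ k * b2 - a1) * ((1/q) ^ k * b2 - b1))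
      = W (Suc k) * (s2 * ((1/q) ^ Suc k * b2 - a2) * ((1/q) ^ Suc k * b2 - b2))"
    by (simp add: x_def)
qed

lemma qEHT_polynomials_orthogonal_qweight:
  fixes q a1 a2 b1 b2 s1 s2 :: real and P :: "nat \<Rightarrow> real poly"
  assumes q: "0 < q" "q < 1" and zeros: "a2 < 0" "0 < a1" "a1 < b2" "b2 < b1"
    and N: "(1/q) ^ N * b2 = b1" and "s1 * s2 < 0"
    and \<sigma>1: "\<sigma>1 = (\<lambda>x. s1 * (x - a1) * (x - b1))"
    and \<sigma>2: "sigma2 q \<sigma>1 \<tau> = (\<lambda>x. s2 * (x - a2) * (x - b2))"
    and P: "\<And>n. degree (P n) = n" "\<And>n. P n \<noteq> 0" "\<And>n. qEHT q \<sigma>1 \<tau> (l n) (poly (P n))"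
    and "inj l"
    and c_def: "c = s2 * a2 / (q\<^sup>2 * s1 * b1)"
    and W_def: "\<And>k. W k = (1/q) ^ k * qweight q b2 (b1/q) a1 a2 ((1/q) ^ k * b2) / c ^ k"
  defines "G \<equiv> \<lambda>n m. \<Sum>k\<le>N. W k * poly (P n) ((1/q) ^ k * b2) * poly (P m) ((1/q) ^ k * b2)"
  shows "\<And>n m. n \<noteq> m \<Longrightarrow> G n m = 0" and "\<And>n. n \<le> N \<Longrightarrow> 0 < G n n"
proof -
  note lattice = qweight_lattice[OF q zeros N \<open>s1 * s2 < 0\<close> c_def W_def]
  have "b2 \<noteq> 0" using zeros by simp
  moreover have "sigma2 q \<sigma>1 \<tau> b2 = 0" "\<sigma>1 ((1/q) ^ N * b2) = 0"
    using \<sigma>1 \<sigma>2 N by simp_all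
  moreover have "W k * \<sigma>1 ((1/q) ^ k * b2) = W (Suc k) * sigma2 q \<sigma>1 \<tau> ((1/q) ^ Suc k * b2)" for k
    using lattice(3)[of k] \<sigma>1 \<sigma>2 by simp
  ultimately show "\<And>n m. n \<noteq> m \<Longrightarrow> G n m = 0" "\<And>n. n \<le> N \<Longrightarrow> 0 < G n n"
    using qEHT_lattice_gram[OF q _ P \<open>inj l\<close>, of b2 N W] lattice(2) unfolding G_def by auto
qed

lemma jackson_int_rho:
  assumes "0 < q" "0 < a" and iota: "exp (\<iota> * of_real (ln q)) = of_real c"
  shows "jackson_int q a N (\<lambda>x. of_real (f x) * rho q \<iota> a b a1 a2 x) =
     of_real ((1/q - 1) * a) * exp (\<iota> * of_real (ln a)) *
     of_real (\<Sum>k\<le>N. (1/q) ^ k * qweight q a b a1 a2 ((1/q) ^ k * a) / c ^ k * f ((1/q) ^ k * a))"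
proof -
  have node: "exp (\<iota> * of_real (ln \<bar>(1/q) ^ k * a\<bar>)) = exp (\<iota> * of_real (ln a)) / of_real c ^ k" for k
  proof -
    have "\<bar>(1/q) ^ k * a\<bar> = (1/q) ^ k * a" "ln ((1/q) ^ k * a) = ln a - real k * ln q"
      using assms(1,2) by (simp_all add: ln_mult ln_realpow ln_div)
    then have "\<iota> * of_real (ln \<bar>(1/q) ^ k * a\<bar>) = \<iota> * of_real (ln a) - of_nat k * (\<iota> * of_real (ln q))"
      by (simp only:) (simp add: algebra_simps)
    then show ?thesis
      by (simp add: exp_diff exp_of_nat_mult iota)
  qed
  show ?thesis
    unfolding jackson_int_def rho_eq_qweight node
    by (simp add: sum_distrib_left algebra_simps)
qed

subsection \<open>Conditions on the parameters\<close>

lemma sigma2_lead_coeff: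
  fixes q s1 s2 t1 :: real
  assumes "q \<noteq> 0"
    and "sigma2 q (\<lambda>x. s1 * (x - a1) * (x - b1)) (\<lambda>x. t1 * x + t0) = (\<lambda>x. s2 * (x - a2) * (x - b2))"
  shows "s2 = q * s1 + (q - 1) * t1"
proof -
  let ?f = "\<lambda>x. s2 * (x - a2) * (x - b2)"
  let ?\<sigma>2 = "sigma2 q (\<lambda>x. s1 * (x - a1) * (x - b1)) (\<lambda>x. t1 * x + t0)"
  have "2 * s2 = ?f 1 + ?f (-1) - 2 * ?f 0"
    by (simp add: algebra_simps)
  also have "\<dots> = ?\<sigma>2 1 + ?\<sigma>2 (-1) - 2 * ?\<sigma>2 0"
    by (simp only: assms(2))
  also have "\<dots> = 2 * (q * s1 + (q - 1) * t1)"
    using assms(1) by (simp add: sigma2_def field_simps)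
  finally show ?thesis by (simp add: algebra_simps)
qed

lemma negative_Lambda_signs:
  fixes q s1 s2 t1 :: real
  assumes "0 < q" "q < 1" "s1 \<noteq> 0" and Lambda: "1 + (1 - 1/q) * t1 / s1 < 0"
    and s2: "s2 = q * s1 + (q - 1) * t1"
  shows "0 < t1 / s1" "s1 * s2 < 0"
proof -
  have "(1 - 1/q) * (t1 / s1) < 0"
    using Lambda by simp
  moreover have "1 - 1/q < 0"
    using assms(1,2) by simp
  ultimately show "0 < t1 / s1"
    using mult_less_0_iff[of "1 - 1/q" "t1 / s1"] by linarith
  have "s1 * s2 = q * s1\<^sup>2 * (1 + (1 - 1/q) * t1 / s1)"
    using assms(1,3) by (simp add: s2 field_simps power2_eq_square)
  also have "\<dots> < 0"
    using Lambda assms(1,3) by (simp add: mult_pos_neg)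
  finally show "s1 * s2 < 0" .
qed

lemma power_int_minus_Suc:
  fixes x :: "'a::field"
  shows "x powi (- int n - 1) = (1/x) ^ Suc n"
proof -
  have "- int n - 1 = - int (Suc n)" by simp
  then show ?thesis
    by (simp only: power_int_minus power_int_of_nat) (simp add: power_one_over inverse_eq_divide)
qed

theorem theorem4p8:
  fixes q s1 a1 b1 t1 t0 s2 a2 b2 :: real
    and \<sigma>1 \<tau> :: "real \<Rightarrow> real"
    and N :: nat and \<iota> :: complex
  assumes q0: "0 < q" and q1: "q < 1"
    and sig1: "\<sigma>1 = (\<lambda>x. (1/2) * (2 * s1) * (x - a1) * (x - b1))" and s1: "s1 \<noteq> 0"
    and tau: "\<tau> = (\<lambda>x. t1 * x + t0)" and t1: "t1 \<noteq> 0"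
    and sig2: "sigma2 q \<sigma>1 \<tau> = (\<lambda>x. (1/2) * (2 * s2) * (x - a2) * (x - b2))" and s2: "s2 \<noteq> 0"
    and zeros: "a2 < 0" "0 < a1" "a1 < b2" "b2 < b1"
    and Lam: "q^2 * (q powi (-2) * (1 + (1 - 1/q) * t1 / ((1/2) * (2 * s1)))) < 0"
    and N: "q powi (- int N - 1) * b2 = b1 / q"
    and iota: "exp (\<iota> * of_real (ln q)) =
                 of_real (q powi (-3) * (2 * s2) * a2 / ((2 * s1) * (b1 / q)))"
  shows "\<exists>P :: nat \<Rightarrow> real poly. \<exists>d :: nat \<Rightarrow> complex.
           (\<forall>n\<le>N. degree (P n) = n \<and> qEHT q \<sigma>1 \<tau> (lam q t1 (2 * s1) n) (poly (P n)) \<and> d n \<noteq> 0) \<and>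
           (\<forall>m\<le>N. \<forall>n\<le>N.
              jackson_int q b2 N
                (\<lambda>x. of_real (poly (P n) x * poly (P m) x) * rho q \<iota> b2 (b1 / q) a1 a2 x)
              = (if m = n then d n else 0))"
proof -
  have "q \<noteq> 1" "0 < b2" using q1 zeros by auto
  have \<sigma>1: "\<sigma>1 = (\<lambda>x. s1 * (x - a1) * (x - b1))" and \<sigma>2: "sigma2 q \<sigma>1 \<tau> = (\<lambda>x. s2 * (x - a2) * (x - b2))"
    using sig1 sig2 by simp_all
  have "1 + (1 - 1/q) * t1 / s1 < 0"
    using Lam q0 by (simp add: power_int_minus mult.assoc[symmetric])
  then have "0 < t1 / s1" "s1 * s2 < 0"
    using negative_Lambda_signs[OF q0 q1 s1] sigma2_lead_coeff[of q s1 a1 b1 t1 t0 s2 a2 b2] q0 \<sigma>1 \<sigma>2 tau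
    by simp_all
  note inj = inj_lam[OF q0 \<open>q \<noteq> 1\<close> s1 \<open>0 < t1 / s1\<close>]
  have "\<sigma>1 = poly [:s1 * a1 * b1, - (s1 * (a1 + b1)), s1:]" "\<tau> = poly [:t0, t1:]"
    using \<sigma>1 tau by (auto simp: fun_eq_iff algebra_simps)
  then obtain P where deg: "\<And>n. degree (P n) = n" and monic: "\<And>n. coeff (P n) n = 1"
    and P: "\<And>n. qEHT q \<sigma>1 \<tau> (lam q t1 (2 * s1) n) (poly (P n))"
    using qEHT_polynomial_solutions[OF \<open>q \<noteq> 1\<close> inj] by metis
  have "P n \<noteq> 0" for n
    using monic[of n] by auto
  define c where "c = s2 * a2 / (q\<^sup>2 * s1 * b1)"
  define W where "W k = (1/q) ^ k * qweight q b2 (b1/q) a1 a2 ((1/q) ^ k * b2) / c ^ k" for k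
  define G where "G n m = (\<Sum>k\<le>N. W k * poly (P n) ((1/q) ^ k * b2) * poly (P m) ((1/q) ^ k * b2))" for n m
  have "(1/q) ^ N * b2 = b1"
    using N q0 by (simp add: power_int_minus_Suc)
  note gram = qEHT_polynomials_orthogonal_qweight[OF q0 q1 zeros this \<open>s1 * s2 < 0\<close> \<sigma>1 \<sigma>2 deg
      \<open>\<And>n. P n \<noteq> 0\<close> P inj c_def W_def, folded G_def]
  have "exp (\<iota> * of_real (ln q)) = of_real c"
    using iota q0 s1 zeros by (simp add: c_def power_int_minus field_simps power2_eq_square power3_eq_cube)
  define K where "K = of_real ((1/q - 1) * b2) * exp (\<iota> * of_real (ln b2))"
  have "K \<noteq> 0"
    using q0 q1 \<open>0 < b2\<close> by (simp add: K_def)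
  have "jackson_int q b2 N (\<lambda>y. of_real (poly (P n) y * poly (P m) y) * rho q \<iota> b2 (b1 / q) a1 a2 y)
      = K * of_real (G n m)" for n m
    unfolding jackson_int_rho[OF q0 \<open>0 < b2\<close> \<open>exp (\<iota> * of_real (ln q)) = of_real c\<close>] G_def W_def K_def
    by (simp add: algebra_simps)
  with deg P gram \<open>K \<noteq> 0\<close> show ?thesis
    by (intro exI[of _ P] exI[of _ "\<lambda>n. K * of_real (G n n)"]) (auto simp: less_imp_neq[symmetric])
qed


end
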